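(* Every radically finite ring of finite Krull dimension is Noetherian.
   Context: All rings are commutative with identity. An ideal $I$ of $R$ is called radically perfect if $\mathrm{ht}(I)=\inf\{n \mid \sqrt{I}=\sqrt{(\theta_1,\dots,\theta_n)} \text{ for some } \theta_1,\dots,\theta_n\in R\}$, and moreover, if $\mathrm{ht}(I)=0$, then $\sqrt{I}=\sqrt{(\theta)}$ for some zero divisor $\theta$ of $R$. A ring $R$ is called radically finite if every prime ideal $P$ of $R$ is radically perfect and, in addition, the set of ideals of $R$ that are generated by $\mathrm{ht}(P)$ elements and have radical $P$ has a maximal member $A$ such that there are only finitely many ideals in any chain of ideals between $A$ and $P$. *)

theory Defs
  imports "HOL-Algebra.Ring_Divisibility" "HOL-Library.Extended_Nat"
begin

definition radical :: "('a, 'b) ring_scheme \<Rightarrow> 'a set \<Rightarrow> 'a set" where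
  "radical R I = {x \<in> carrier R. \<exists>n::nat. x [^]\<^bsub>R\<^esub> n \<in> I}"

definition zero_divisor :: "('a, 'b) ring_scheme \<Rightarrow> 'a \<Rightarrow> bool" where
  "zero_divisor R a \<longleftrightarrow> a \<in> carrier R \<and>
     (\<exists>y \<in> carrier R. y \<noteq> \<zero>\<^bsub>R\<^esub> \<and> a \<otimes>\<^bsub>R\<^esub> y = \<zero>\<^bsub>R\<^esub>)"

definition prime_height :: "('a, 'b) ring_scheme \<Rightarrow> 'a set \<Rightarrow> enat" where
  "prime_height R P = Sup {enat n | n. \<exists>f :: nat \<Rightarrow> 'a set.
      (\<forall>i\<le>n. primeideal (f i) R) \<and> (\<forall>i<n. f i \<subset> f (Suc i)) \<and> f n = P}"

definition ideal_height :: "('a, 'b) ring_scheme \<Rightarrow> 'a set \<Rightarrow> enat" where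
  "ideal_height R I = Inf {prime_height R P | P. primeideal P R \<and> I \<subseteq> P}"

definition gen_by :: "('a, 'b) ring_scheme \<Rightarrow> nat \<Rightarrow> 'a set \<Rightarrow> bool" where
  "gen_by R n J \<longleftrightarrow> (\<exists>\<theta> :: nat \<Rightarrow> 'a. \<theta> ` {..<n} \<subseteq> carrier R \<and> J = Idl\<^bsub>R\<^esub> (\<theta> ` {..<n}))"

definition radically_perfect :: "('a, 'b) ring_scheme \<Rightarrow> 'a set \<Rightarrow> bool" where
  "radically_perfect R I \<longleftrightarrow>
     ideal_height R I = Inf {enat n | n. \<exists>J. gen_by R n J \<and> radical R I = radical R J} \<and>
     (ideal_height R I = 0 \<longrightarrow>
        (\<exists>\<theta>. zero_divisor R \<theta> \<and> radical R I = radical R (Idl\<^bsub>R\<^esub> {\<theta>})))"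

definition radically_finite :: "('a, 'b) ring_scheme \<Rightarrow> bool" where
  "radically_finite R \<longleftrightarrow> (\<forall>P. primeideal P R \<longrightarrow>
     radically_perfect R P \<and>
     (\<exists>n A. ideal_height R P = enat n \<and>
        gen_by R n A \<and> radical R A = P \<and>
        \<not> (\<exists>B. gen_by R n B \<and> radical R B = P \<and> A \<subset> B) \<and>
        (\<forall>C. subset.chain {I. ideal I R \<and> A \<subseteq> I \<and> I \<subseteq> P} C \<longrightarrow> finite C)))"

definition finite_krull_dim :: "('a, 'b) ring_scheme \<Rightarrow> bool" where
  "finite_krull_dim R \<longleftrightarrow> (\<exists>d::nat. \<forall>P. primeideal P R \<longrightarrow> prime_height R P \<le> enat d)"

end

theory Submission
  imports Defs
begin

text \<open>
  Let \<open>P\<close> be a prime ideal. Radical finiteness provides a finitely generated ideal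
  \<open>A \<subseteq> P\<close> such that every chain of ideals between \<open>A\<close> and \<open>P\<close> is finite. Hence the
  finitely generated ideals between \<open>A\<close> and \<open>P\<close> have a maximal member, and adjoining any
  element of \<open>P\<close> to its generators shows that this member is \<open>P\<close> itself. So every prime
  ideal is finitely generated, and Cohen's theorem applies: an ideal \<open>M\<close> maximal among
  the non-finitely generated ideals is prime. Indeed, if \<open>a \<otimes> b \<in> M\<close> with \<open>a, b \<notin> M\<close>, then
  \<open>M + (a)\<close> and \<open>(M : a)\<close> are finitely generated; writing the generators of \<open>M + (a)\<close> as
  \<open>m\<^sub>i + r\<^sub>i a\<close> with \<open>m\<^sub>i \<in> M\<close>, the \<open>m\<^sub>i\<close> together with \<open>a t\<^sub>j\<close> for generators \<open>t\<^sub>j\<close>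
  of \<open>(M : a)\<close> generate \<open>M\<close>.
\<close>

definition finitely_generated :: "('a, 'b) ring_scheme \<Rightarrow> 'a set \<Rightarrow> bool" where
  "finitely_generated R I \<longleftrightarrow> (\<exists>S \<subseteq> carrier R. finite S \<and> I = Idl\<^bsub>R\<^esub> S)"

lemma subset_Zorn_finite_chains:
  assumes "A \<noteq> {}" and "\<And>C. subset.chain A C \<Longrightarrow> finite C"
  shows "\<exists>M\<in>A. \<forall>X\<in>A. M \<subseteq> X \<longrightarrow> X = M"
proof (rule subset_Zorn)
  fix C assume C: "subset.chain A C"
  show "\<exists>U\<in>A. \<forall>X\<in>C. X \<subseteq> U"
  proof (cases "C = {}")
    case True
    with assms(1) show ?thesis by blast
  next
    case False
    have "\<Union>C \<in> C" by (rule Union_in_chain[OF assms(2)[OF C] False C])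
    with C show ?thesis by (auto simp: subset_chain_def)
  qed
qed

context ring
begin

lemma finitely_generated_ideal: "finitely_generated R I \<Longrightarrow> ideal I R"
  unfolding finitely_generated_def using genideal_ideal by blast

lemma finitely_generated_if_gen_by: "gen_by R n I \<Longrightarrow> finitely_generated R I"
  unfolding gen_by_def finitely_generated_def by blast

lemma noetherian_ring_iff: "noetherian_ring R \<longleftrightarrow> (\<forall>I. ideal I R \<longrightarrow> finitely_generated R I)"
  using noetherian_ringI noetherian_ring.finetely_gen
  unfolding finitely_generated_def by blast

lemma subset_radical:
  assumes "I \<subseteq> carrier R"
  shows "I \<subseteq> radical R I"
proof
  fix x assume x: "x \<in> I"
  then have "x [^] Suc 0 \<in> I" using assms by auto
  then show "x \<in> radical R I" using x assms unfolding radical_def by blast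
qed

lemma finitely_generated_if_finite_chains_between:
  assumes P: "ideal P R" and A: "finitely_generated R A" "A \<subseteq> P"
    and chains: "\<And>C. subset.chain {I. ideal I R \<and> A \<subseteq> I \<and> I \<subseteq> P} C \<Longrightarrow> finite C"
  shows "finitely_generated R P"
proof -
  define F where "F = {I. finitely_generated R I \<and> A \<subseteq> I \<and> I \<subseteq> P}"
  have "F \<subseteq> {I. ideal I R \<and> A \<subseteq> I \<and> I \<subseteq> P}"
    unfolding F_def using finitely_generated_ideal by blast
  then have "finite C" if "subset.chain F C" for C
    using chains that unfolding subset_chain_def by (meson order_trans)
  moreover have "A \<in> F" using A by (simp add: F_def)
  ultimately obtain M where "M \<in> F" and M_max: "\<And>X. X \<in> F \<Longrightarrow> M \<subseteq> X \<Longrightarrow> X = M"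
    using subset_Zorn_finite_chains[of F] by blast
  then obtain S where S: "S \<subseteq> carrier R" "finite S" "M = Idl S" and "A \<subseteq> M" "M \<subseteq> P"
    unfolding F_def finitely_generated_def by blast
  have "x \<in> M" if x: "x \<in> P" for x
  proof -
    have xS: "insert x S \<subseteq> carrier R" using S(1) x ideal.Icarr[OF P] by blast
    have "M \<subseteq> Idl (insert x S)"
      unfolding S(3) using xS by (rule subset_Idl_subset) blast
    moreover have "Idl (insert x S) \<subseteq> P"
      using Idl_subset_ideal[OF P xS] genideal_self[OF S(1)] S(3) \<open>M \<subseteq> P\<close> x by blast
    ultimately have "Idl (insert x S) \<in> F"
      using xS S(2) \<open>A \<subseteq> M\<close> unfolding F_def finitely_generated_def by blast
    then have "Idl (insert x S) = M" using M_max \<open>M \<subseteq> Idl (insert x S)\<close> by blast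
    then show "x \<in> M" using genideal_self[OF xS] by blast
  qed
  then have "M = P" using \<open>M \<subseteq> P\<close> by blast
  with \<open>M \<in> F\<close> show ?thesis by (simp add: F_def)
qed

lemma primeideal_finitely_generated_if_radically_finite:
  assumes "radically_finite R" and P: "primeideal P R"
  shows "finitely_generated R P"
proof -
  obtain n A where A: "gen_by R n A" "radical R A = P"
    and chains: "\<And>C. subset.chain {I. ideal I R \<and> A \<subseteq> I \<and> I \<subseteq> P} C \<Longrightarrow> finite C"
    using assms unfolding radically_finite_def by blast
  have "finitely_generated R A" using A(1) by (rule finitely_generated_if_gen_by)
  moreover have "A \<subseteq> P"
    using A(2) subset_radical ideal.Icarr[OF finitely_generated_ideal[OF calculation]] by blast
  ultimately show ?thesis
    using finitely_generated_if_finite_chains_between[OF primeideal.axioms(1)[OF P]] chains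
    by blast
qed

lemma Union_chain_mem_if_finitely_generated:
  assumes "C \<noteq> {}" and chain: "subset.chain {I. ideal I R} C"
    and "finitely_generated R (\<Union>C)"
  shows "\<Union>C \<in> C"
proof -
  obtain S where S: "S \<subseteq> carrier R" "finite S" "\<Union>C = Idl S"
    using assms(3) unfolding finitely_generated_def by blast
  then have "S \<subseteq> \<Union>C" using genideal_self by blast
  then obtain I where I: "I \<in> C" "S \<subseteq> I"
    using finite_subset_Union_chain[OF S(2) _ assms(1) chain] by blast
  then have "ideal I R" using chain unfolding subset_chain_def by blast
  with I S(3) have "\<Union>C = I" using genideal_minimal by blast
  with I(1) show ?thesis by simp
qed

lemma exists_maximal_not_finitely_generated:
  assumes "\<not> noetherian_ring R"
  obtains M where "ideal M R" "\<not> finitely_generated R M"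
    and "\<And>J. ideal J R \<Longrightarrow> M \<subset> J \<Longrightarrow> finitely_generated R J"
proof -
  define Bad where "Bad = {I. ideal I R \<and> \<not> finitely_generated R I}"
  have "Bad \<noteq> {}" using assms noetherian_ring_iff unfolding Bad_def by blast
  have "\<exists>M\<in>Bad. \<forall>X\<in>Bad. M \<subseteq> X \<longrightarrow> X = M"
  proof (rule subset_Zorn)
    fix C assume C: "subset.chain Bad C"
    show "\<exists>U\<in>Bad. \<forall>X\<in>C. X \<subseteq> U"
    proof (cases "C = {}")
      case True
      with \<open>Bad \<noteq> {}\<close> show ?thesis by blast
    next
      case False
      have ideals: "subset.chain {I. ideal I R} C"
        using C unfolding subset_chain_def Bad_def by blast
      then have "ideal (\<Union>C) R" using chain_Union_is_ideal[OF ideals] False by simp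
      moreover have "\<not> finitely_generated R (\<Union>C)"
        using Union_chain_mem_if_finitely_generated[OF False ideals] C
        unfolding subset_chain_def Bad_def by blast
      ultimately show ?thesis unfolding Bad_def by blast
    qed
  qed
  then show ?thesis using that unfolding Bad_def by blast
qed

end

context cring
begin

lemma mem_add_cgenideal_iff:
  "x \<in> I <+>\<^bsub>R\<^esub> PIdl a \<longleftrightarrow> (\<exists>i\<in>I. \<exists>r\<in>carrier R. x = i \<oplus> r \<otimes> a)"
  unfolding set_add_def' cgenideal_def by auto

lemma subideal_eq_if_add_cgenideal_and_colon:
  assumes M: "ideal M R" and N: "ideal N R" "N \<subseteq> M" and a: "a \<in> carrier R"
    and add: "M \<subseteq> N <+>\<^bsub>R\<^esub> PIdl a"
    and colon: "{x \<in> carrier R. a \<otimes> x \<in> M} \<subseteq> {x \<in> carrier R. a \<otimes> x \<in> N}"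
  shows "M = N"
proof -
  interpret M: ideal M R by fact
  interpret N: ideal N R by fact
  have "m \<in> N" if m: "m \<in> M" for m
  proof -
    have "m \<in> N <+>\<^bsub>R\<^esub> PIdl a" using add m by blast
    then obtain n r where n: "n \<in> N" and r: "r \<in> carrier R" and m_eq: "m = n \<oplus> r \<otimes> a"
      unfolding mem_add_cgenideal_iff by blast
    have n_carr: "n \<in> carrier R" using n N.Icarr by blast
    have "a \<otimes> r = \<ominus> n \<oplus> m"
      using n_carr r a by (simp add: m_eq add.m_assoc[symmetric] m_comm l_neg)
    then have "a \<otimes> r \<in> M" using n m \<open>N \<subseteq> M\<close> by (simp add: M.a_closed M.a_inv_closed subsetD)
    then have "a \<otimes> r \<in> N" using colon r by blast
    then show "m \<in> N" using m_eq n r a by (simp add: m_comm N.a_closed)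
  qed
  with N show ?thesis by blast
qed

lemma subset_add_cgenideal:
  assumes M: "ideal M R" and a: "a \<in> carrier R"
  shows "M \<union> PIdl a \<subseteq> M <+>\<^bsub>R\<^esub> PIdl a"
proof -
  have "M \<union> PIdl a \<subseteq> carrier R"
    using ideal.Icarr[OF M] ideal.Icarr[OF cgenideal_ideal[OF a]] by blast
  from genideal_self[OF this] show ?thesis
    unfolding union_genideal[OF M cgenideal_ideal[OF a]] .
qed

lemma finitely_generated_if_add_cgenideal_and_colon:
  assumes M: "ideal M R" and a: "a \<in> carrier R"
    and add: "finitely_generated R (M <+>\<^bsub>R\<^esub> PIdl a)"
    and colon: "finitely_generated R {x \<in> carrier R. a \<otimes> x \<in> M}"
  shows "finitely_generated R M"
proof -
  interpret M: ideal M R by fact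
  obtain S where S: "S \<subseteq> carrier R" "finite S" "M <+>\<^bsub>R\<^esub> PIdl a = Idl S"
    using add unfolding finitely_generated_def by blast
  obtain T where T: "T \<subseteq> carrier R" "finite T" "{x \<in> carrier R. a \<otimes> x \<in> M} = Idl T"
    using colon unfolding finitely_generated_def by blast
  have "\<exists>m r. m \<in> M \<and> r \<in> carrier R \<and> s = m \<oplus> r \<otimes> a" if "s \<in> S" for s
  proof -
    have "s \<in> M <+>\<^bsub>R\<^esub> PIdl a" using genideal_self[OF S(1)] S(3) that by blast
    then show ?thesis by (auto simp: mem_add_cgenideal_iff)
  qed
  then obtain m r where mr: "\<And>s. s \<in> S \<Longrightarrow> m s \<in> M \<and> r s \<in> carrier R \<and> s = m s \<oplus> r s \<otimes> a"
    by metis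
  have T_colon: "T \<subseteq> {x \<in> carrier R. a \<otimes> x \<in> M}" using genideal_self[OF T(1)] T(3) by simp
  define G where "G = m ` S \<union> (\<otimes>) a ` T"
  have "G \<subseteq> M" using mr T_colon unfolding G_def by auto
  then have G_carr: "G \<subseteq> carrier R" using M.Icarr by blast
  define N where "N = Idl G"
  have N: "ideal N R" unfolding N_def by (rule genideal_ideal[OF G_carr])
  have "N \<subseteq> M" unfolding N_def by (rule genideal_minimal[OF M \<open>G \<subseteq> M\<close>])
  have "G \<subseteq> N" unfolding N_def by (rule genideal_self[OF G_carr])
  have "M \<subseteq> M <+>\<^bsub>R\<^esub> PIdl a"
    using subset_add_cgenideal[OF M a] by blast
  also have "\<dots> \<subseteq> N <+>\<^bsub>R\<^esub> PIdl a"
  proof -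
    have "S \<subseteq> N <+>\<^bsub>R\<^esub> PIdl a"
    proof
      fix s assume s: "s \<in> S"
      then have "m s \<in> N" using \<open>G \<subseteq> N\<close> unfolding G_def by blast
      with mr[OF s] show "s \<in> N <+>\<^bsub>R\<^esub> PIdl a" unfolding mem_add_cgenideal_iff by blast
    qed
    then show ?thesis
      unfolding S(3) by (rule genideal_minimal[OF add_ideals[OF N cgenideal_ideal[OF a]]])
  qed
  finally have M_sub: "M \<subseteq> N <+>\<^bsub>R\<^esub> PIdl a" .
  have "T \<subseteq> {x \<in> carrier R. a \<otimes> x \<in> N}"
    using T(1) \<open>G \<subseteq> N\<close> unfolding G_def by blast
  then have "Idl T \<subseteq> {x \<in> carrier R. a \<otimes> x \<in> N}"
    by (rule genideal_minimal[OF ideal.helper_max_prime[OF N is_cring a]])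
  then have "M = N"
    using subideal_eq_if_add_cgenideal_and_colon[OF M N \<open>N \<subseteq> M\<close> a M_sub] T(3) by simp
  moreover have "finite G" using S(2) T(2) unfolding G_def by blast
  ultimately show ?thesis
    using G_carr unfolding finitely_generated_def N_def by blast
qed

lemma primeideal_if_maximal_not_finitely_generated:
  assumes M: "ideal M R" and not_fg: "\<not> finitely_generated R M"
    and larger_fg: "\<And>J. ideal J R \<Longrightarrow> M \<subset> J \<Longrightarrow> finitely_generated R J"
  shows "primeideal M R"
proof (rule primeidealI[OF M is_cring])
  interpret M: ideal M R by fact
  show "carrier R \<noteq> M"
    using not_fg genideal_one unfolding finitely_generated_def by blast
  fix a b assume a: "a \<in> carrier R" and b: "b \<in> carrier R" and ab: "a \<otimes> b \<in> M"
  show "a \<in> M \<or> b \<in> M"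
  proof (rule ccontr)
    assume "\<not> (a \<in> M \<or> b \<in> M)"
    then have "a \<notin> M" "b \<notin> M" by auto
    have "finitely_generated R (M <+>\<^bsub>R\<^esub> PIdl a)"
      using larger_fg[OF add_ideals[OF M cgenideal_ideal[OF a]]] subset_add_cgenideal[OF M a]
        cgenideal_self[OF a] \<open>a \<notin> M\<close>
      by blast
    moreover have "finitely_generated R {x \<in> carrier R. a \<otimes> x \<in> M}"
      using larger_fg[OF M.helper_max_prime[OF is_cring a]] a b ab \<open>b \<notin> M\<close> M.Icarr M.I_l_closed
      by blast
    ultimately show False
      using finitely_generated_if_add_cgenideal_and_colon[OF M a] not_fg by blast
  qed
qed

theorem noetherian_ring_if_primeideals_finitely_generated:
  assumes "\<And>P. primeideal P R \<Longrightarrow> finitely_generated R P"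
  shows "noetherian_ring R"
proof (rule ccontr)
  assume "\<not> noetherian_ring R"
  then obtain M where "ideal M R" "\<not> finitely_generated R M"
    and "\<And>J. ideal J R \<Longrightarrow> M \<subset> J \<Longrightarrow> finitely_generated R J"
    using exists_maximal_not_finitely_generated by blast
  then have "primeideal M R" by (rule primeideal_if_maximal_not_finitely_generated)
  with assms \<open>\<not> finitely_generated R M\<close> show False by blast
qed

end

theorem corollary2p2:
  fixes R :: "('a, 'b) ring_scheme"
  assumes "cring R"
    and "radically_finite R"
    and "finite_krull_dim R"
  shows "noetherian_ring R"
proof -
  interpret cring R by fact
  show ?thesis
    using primeideal_finitely_generated_if_radically_finite[OF assms(2)]
    by (rule noetherian_ring_if_primeideals_finitely_generated)
qed

end
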